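(* (Discrete inf–sup condition.) There is a constant $\beta>0$, independent of the mesh sizes $h$ and $l$, such that for every admissible discrete displacement $\boldsymbol v=(v^x,v^y)$ $$\sup_{\underline\tau\neq 0}\frac{(D_x\tau^{11}+d_y\tau^{12},v^x)_{TM}+(d_x\tau^{12}+D_y\tau^{22},v^y)_{MT}}{\|\underline\tau\|}\ \ge\ \beta\,\|\boldsymbol v\|,$$ where the supremum is over all nonzero discrete stresses $\underline\tau=(\tau^{11},\tau^{22},\tau^{12})$.
   Context: Let $\Omega=(0,a)\times(0,b)$ with grids $0=x_0<x_1<\dots<x_{n_x}=a$ and $0=y_0<\dots<y_{n_y}=b$. Set $x_{i+1/2}=(x_i+x_{i+1})/2$, $h_{i+1/2}=x_{i+1}-x_i$, $h_i=(h_{i-1/2}+h_{i+1/2})/2$ for $1\le i\le n_x-1$, $h_0=h_{1/2}/2$, $h_{n_x}=h_{n_x-1/2}/2$, $h=\max_i h_{i+1/2}$; analogously $y_{j+1/2}$, $l_{j+1/2}=y_{j+1}-y_j$, $l_j=(l_{j-1/2}+l_{j+1/2})/2$ ($1\le j\le n_y-1$), $l_0=l_{1/2}/2$, $l_{n_y}=l_{n_y-1/2}/2$, $l=\max_j l_{j+1/2}$. For a discrete function $\phi$ write $\phi_{\alpha,\beta}=\phi(x_\alpha,y_\beta)$ ($\alpha,\beta$ integers or half-integers). Difference quotients: $[d_x\phi]_{i+1/2,m}=(\phi_{i+1,m}-\phi_{i,m})/h_{i+1/2}$, $[d_y\phi]_{k,j+1/2}=(\phi_{k,j+1}-\phi_{k,j})/l_{j+1/2}$,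 $[D_x\phi]_{i,m}=(\phi_{i+1/2,m}-\phi_{i-1/2,m})/h_i$ for $1\le i\le n_x-1$, $[D_y\phi]_{k,j}=(\phi_{k,j+1/2}-\phi_{k,j-1/2})/l_j$ for $1\le j\le n_y-1$, and at the boundary $[D_x\phi]_{0,m}=(\phi_{1/2,m}-\phi_{0,m})/h_0$, $[D_x\phi]_{n_x,m}=(\phi_{n_x,m}-\phi_{n_x-1/2,m})/h_{n_x}$, $[D_y\phi]_{k,0}=(\phi_{k,1/2}-\phi_{k,0})/l_0$, $[D_y\phi]_{k,n_y}=(\phi_{k,n_y}-\phi_{k,n_y-1/2})/l_{n_y}$. Discrete inner products: $(\phi,\theta)_M=\sum_{i=0}^{n_x-1}\sum_{j=0}^{n_y-1}h_{i+1/2}l_{j+1/2}\phi_{i+1/2,j+1/2}\theta_{i+1/2,j+1/2}$; $(\phi,\theta)_T=\sum_{i=0}^{n_x}\sum_{j=0}^{n_y}h_il_j\phi_{i,j}\theta_{i,j}$; $(\phi,\theta)_{TM}=\sum_{i=1}^{n_x-1}\sum_{j=0}^{n_y-1}h_il_{j+1/2}\phi_{i,j+1/2}\theta_{i,j+1/2}$; $(\phi,\theta)_{MT}=\sum_{i=0}^{n_x-1}\sum_{j=1}^{n_y-1}h_{i+1/2}l_j\phi_{i+1/2,j}\theta_{i+1/2,j}$; $\|\phi\|_\xi^2=(\phi,\phi)_\xi$. A discrete stress $\underline\tau=(\tau^{11},\tau^{22},\tau^{12})$ consists of $\tau^{11},\tau^{22}$ defined at cell centers $(x_{i+1/2},y_{j+1/2})$,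 $0\le i\le n_x-1$, $0\le j\le n_y-1$, and $\tau^{12}$ defined at nodes $(x_i,y_j)$, $0\le i\le n_x$, $0\le j\le n_y$; $\|\underline\tau\|^2=\|\tau^{11}\|_M^2+\|\tau^{22}\|_M^2+\|\tau^{12}\|_T^2$. An admissible discrete displacement $\boldsymbol v=(v^x,v^y)$ consists of $v^x$ defined at the points $(x_i,y_{j+1/2})$ ($0\le i\le n_x,0\le j\le n_y-1$) and $(x_i,y_0),(x_i,y_{n_y})$ ($0\le i\le n_x$), and $v^y$ defined at $(x_{i+1/2},y_j)$ ($0\le i\le n_x-1,0\le j\le n_y$) and $(x_0,y_j),(x_{n_x},y_j)$ ($0\le j\le n_y$), such that $v^x$ and $v^y$ vanish at all of their points lying on $\partial\Omega$; $\|\boldsymbol v\|^2=\|v^x\|_{TM}^2+\|v^y\|_{MT}^2$. *)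

theory Defs
  imports Complex_Main
begin

definition valid_grid :: "real \<Rightarrow> nat \<Rightarrow> (nat \<Rightarrow> real) \<Rightarrow> bool" where
  "valid_grid a n x \<longleftrightarrow> 1 \<le> n \<and> x 0 = 0 \<and> x n = a \<and> (\<forall>i<n. x i < x (Suc i))"

definition hh :: "(nat \<Rightarrow> real) \<Rightarrow> nat \<Rightarrow> real" where
  "hh x i = x (Suc i) - x i"

text \<open>hn x n i = h_i (dual mesh size at node i)\<close>
definition hn :: "(nat \<Rightarrow> real) \<Rightarrow> nat \<Rightarrow> nat \<Rightarrow> real" where
  "hn x n i = (if i = 0 then hh x 0 / 2
               else if i = n then hh x (n - 1) / 2
               else (hh x (i - 1) + hh x i) / 2)"

type_synonym gridfun = "nat \<Rightarrow> nat \<Rightarrow> real"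

text \<open>Discrete stresses (t11, t22, t12): t11 i j, t22 i j are the values at the cell centre
  (x_{i+1/2}, y_{j+1/2}), i < nx, j < ny; t12 i j is the value at node (x_i, y_j), i \<le> nx, j \<le> ny.\<close>
definition discrete_stresses :: "nat \<Rightarrow> nat \<Rightarrow> (gridfun \<times> gridfun \<times> gridfun) set" where
  "discrete_stresses nx ny = {(t11, t22, t12).
      (\<forall>i j. \<not> (i < nx \<and> j < ny) \<longrightarrow> t11 i j = 0 \<and> t22 i j = 0) \<and>
      (\<forall>i j. \<not> (i \<le> nx \<and> j \<le> ny) \<longrightarrow> t12 i j = 0)}"

definition zero_stress :: "gridfun \<times> gridfun \<times> gridfun" where
  "zero_stress = ((\<lambda>_ _. 0), (\<lambda>_ _. 0), (\<lambda>_ _. 0))"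

text \<open>Admissible discrete displacements (vx, vy): vx i j is the value at (x_i, y_{j+1/2}),
  i \<le> nx, j < ny; vy i j is the value at (x_{i+1/2}, y_j), i < nx, j \<le> ny.
  The values of vx at (x_i,y_0),(x_i,y_ny) and of vy at (x_0,y_j),(x_nx,y_j) lie on the
  boundary and are therefore 0; they are not stored.\<close>
definition admissible_displacements :: "nat \<Rightarrow> nat \<Rightarrow> (gridfun \<times> gridfun) set" where
  "admissible_displacements nx ny = {(vx, vy).
      (\<forall>i j. \<not> (i \<le> nx \<and> j < ny) \<longrightarrow> vx i j = 0) \<and>
      (\<forall>i j. \<not> (i < nx \<and> j \<le> ny) \<longrightarrow> vy i j = 0) \<and>
      (\<forall>j. vx 0 j = 0 \<and> vx nx j = 0) \<and>
      (\<forall>i. vy i 0 = 0 \<and> vy i ny = 0)}"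

definition bform :: "nat \<Rightarrow> nat \<Rightarrow> (nat \<Rightarrow> real) \<Rightarrow> (nat \<Rightarrow> real)
    \<Rightarrow> gridfun \<times> gridfun \<times> gridfun \<Rightarrow> gridfun \<times> gridfun \<Rightarrow> real" where
  "bform nx ny x y \<tau> v = (case \<tau> of (t11, t22, t12) \<Rightarrow> case v of (vx, vy) \<Rightarrow>
     (\<Sum>i\<in>{1..<nx}. \<Sum>j<ny. hn x nx i * hh y j *
        ((t11 i j - t11 (i - 1) j) / hn x nx i + (t12 i (Suc j) - t12 i j) / hh y j) * vx i j)
   + (\<Sum>i<nx. \<Sum>j\<in>{1..<ny}. hh x i * hn y ny j *
        ((t12 (Suc i) j - t12 i j) / hh x i + (t22 i j - t22 i (j - 1)) / hn y ny j) * vy i j))"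

definition stress_norm :: "nat \<Rightarrow> nat \<Rightarrow> (nat \<Rightarrow> real) \<Rightarrow> (nat \<Rightarrow> real)
    \<Rightarrow> gridfun \<times> gridfun \<times> gridfun \<Rightarrow> real" where
  "stress_norm nx ny x y \<tau> = (case \<tau> of (t11, t22, t12) \<Rightarrow>
     sqrt ((\<Sum>i<nx. \<Sum>j<ny. hh x i * hh y j * (t11 i j)\<^sup>2)
         + (\<Sum>i<nx. \<Sum>j<ny. hh x i * hh y j * (t22 i j)\<^sup>2)
         + (\<Sum>i\<le>nx. \<Sum>j\<le>ny. hn x nx i * hn y ny j * (t12 i j)\<^sup>2)))"

definition disp_norm :: "nat \<Rightarrow> nat \<Rightarrow> (nat \<Rightarrow> real) \<Rightarrow> (nat \<Rightarrow> real)
    \<Rightarrow> gridfun \<times> gridfun \<Rightarrow> real" where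
  "disp_norm nx ny x y v = (case v of (vx, vy) \<Rightarrow>
     sqrt ((\<Sum>i\<in>{1..<nx}. \<Sum>j<ny. hn x nx i * hh y j * (vx i j)\<^sup>2)
         + (\<Sum>i<nx. \<Sum>j\<in>{1..<ny}. hh x i * hn y ny j * (vy i j)\<^sup>2)))"

end

theory Submission
  imports Defs "HOL-Analysis.Convex"
begin

text \<open>Given a displacement v, take \<tau>12 = 0 and let \<tau>11 and \<tau>22 be discrete primitives
  of vx in x and of vy in y, so that D_x \<tau>11 = vx and D_y \<tau>22 = vy and the form equals
  \<parallel>v\<parallel>^2. By a weighted Cauchy-Schwarz inequality a primitive on (0,a) is at most a times
  its derivative in the discrete L2 norms, so \<parallel>\<tau>\<parallel> \<le> max a b \<parallel>v\<parallel>, giving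
  \<beta> = 1 / max a b. Since the supremum is taken in the reals, the quotients must also be
  bounded above: for a fixed mesh every stress value is bounded by \<parallel>\<tau>\<parallel> over the
  square root of the smallest cell area. For v = 0 the supremum is at least 0, witnessed by a
  stress whose only nonzero value sits at a corner node, which the form never reads.\<close>

lemma weighted_Cauchy_Schwarz_sum:
  fixes w v :: "'a \<Rightarrow> real"
  assumes "\<And>i. i \<in> A \<Longrightarrow> 0 \<le> w i"
  shows "(\<Sum>i\<in>A. w i * v i)\<^sup>2 \<le> (\<Sum>i\<in>A. w i) * (\<Sum>i\<in>A. w i * (v i)\<^sup>2)"
proof -
  have "(\<Sum>i\<in>A. w i * v i) = (\<Sum>i\<in>A. sqrt (w i) * (sqrt (w i) * v i))"
    "(\<Sum>i\<in>A. w i) = (\<Sum>i\<in>A. (sqrt (w i))\<^sup>2)"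
    "(\<Sum>i\<in>A. w i * (v i)\<^sup>2) = (\<Sum>i\<in>A. (sqrt (w i) * v i)\<^sup>2)"
    using assms by (auto intro!: sum.cong simp: power_mult_distrib simp flip: mult.assoc)
  then show ?thesis
    using Cauchy_Schwarz_ineq_sum[of "\<lambda>i. sqrt (w i)" "\<lambda>i. sqrt (w i) * v i" A] by simp
qed

lemma hh_pos: "valid_grid a n x \<Longrightarrow> i < n \<Longrightarrow> 0 < hh x i"
  by (simp add: valid_grid_def hh_def)

lemma hh_nonneg: "valid_grid a n x \<Longrightarrow> i < n \<Longrightarrow> 0 \<le> hh x i"
  using hh_pos less_imp_le by blast

lemma sum_hh_eq: "valid_grid a n x \<Longrightarrow> (\<Sum>i<n. hh x i) = a"
  unfolding valid_grid_def hh_def by (simp add: sum_lessThan_telescope)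

lemma valid_grid_pos:
  assumes "valid_grid a n x" shows "0 < a"
proof -
  have "0 < n" using assms by (simp add: valid_grid_def)
  then have "0 < (\<Sum>i<n. hh x i)"
    using hh_pos[OF assms] by (intro sum_pos) auto
  then show ?thesis using sum_hh_eq[OF assms] by simp
qed

lemma sum_hn_interior_le:
  assumes g: "valid_grid a n x"
  shows "(\<Sum>i\<in>{1..<n}. hn x n i) \<le> a"
proof -
  note hh_nonneg = hh_nonneg[OF g]
  have left: "(\<Sum>i\<in>{1..<n}. hh x (i - 1)) \<le> a"
  proof -
    obtain m where m: "n = Suc m" using g by (cases n) (auto simp: valid_grid_def)
    have "(\<Sum>i\<in>{1..<n}. hh x (i - 1)) = (\<Sum>i<n - 1. hh x i)"
      using sum.shift_bounds_nat_ivl[of "\<lambda>i. hh x (i - 1)" 0 1 m]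
      by (simp add: m atLeast0LessThan)
    also have "\<dots> \<le> (\<Sum>i<n. hh x i)"
      using hh_nonneg by (intro sum_mono2) auto
    finally show ?thesis using sum_hh_eq[OF g] by simp
  qed
  have "(\<Sum>i\<in>{1..<n}. hh x i) \<le> (\<Sum>i<n. hh x i)"
    using hh_nonneg by (intro sum_mono2) auto
  then have right: "(\<Sum>i\<in>{1..<n}. hh x i) \<le> a"
    using sum_hh_eq[OF g] by simp
  have "(\<Sum>i\<in>{1..<n}. hn x n i) = ((\<Sum>i\<in>{1..<n}. hh x (i - 1)) + (\<Sum>i\<in>{1..<n}. hh x i)) / 2"
    by (simp add: hn_def sum.distrib flip: sum_divide_distrib)
  with left right show ?thesis by simp
qed

definition mesh_min :: "(nat \<Rightarrow> real) \<Rightarrow> nat \<Rightarrow> real" where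
  "mesh_min x n = Min (hh x ` {..<n}) / 2"

lemma mesh_min_pos:
  assumes g: "valid_grid a n x" shows "0 < mesh_min x n"
proof -
  have "{..<n} \<noteq> {}" using g by (auto simp: valid_grid_def lessThan_empty_iff)
  then have "Min (hh x ` {..<n}) \<in> hh x ` {..<n}" by simp
  then show ?thesis using hh_pos[OF g] by (auto simp: mesh_min_def)
qed

lemma mesh_min_le_hh:
  assumes g: "valid_grid a n x" and "i < n"
  shows "mesh_min x n \<le> hh x i"
proof -
  have "Min (hh x ` {..<n}) \<le> hh x i" using \<open>i < n\<close> by simp
  then show ?thesis using hh_pos[OF g \<open>i < n\<close>] by (simp add: mesh_min_def)
qed

lemma mesh_min_le_hn:
  assumes g: "valid_grid a n x" and "i \<le> n"
  shows "mesh_min x n \<le> hn x n i"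
proof -
  have n: "1 \<le> n" using g by (simp add: valid_grid_def)
  have "\<exists>k<n. hh x k / 2 \<le> hn x n i"
  proof (cases "i = 0 \<or> i = n")
    case True
    with n have "hh x 0 / 2 \<le> hn x n i \<or> hh x (n - 1) / 2 \<le> hn x n i"
      by (auto simp: hn_def)
    with n show ?thesis by (metis diff_less less_le_trans zero_less_one)
  next
    case False
    then have "i < n" "0 < hh x (i - 1)" using assms hh_pos[OF g, of "i - 1"] by auto
    with False show ?thesis by (auto simp: hn_def)
  qed
  then obtain k where "k < n" "hh x k / 2 \<le> hn x n i" by blast
  moreover have "mesh_min x n \<le> hh x k / 2"
    using \<open>k < n\<close> by (simp add: mesh_min_def Min_le)
  ultimately show ?thesis by linarith
qed

lemma hn_pos: "valid_grid a n x \<Longrightarrow> i \<le> n \<Longrightarrow> 0 < hn x n i"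
  using mesh_min_pos mesh_min_le_hn by (meson less_le_trans)

lemma hn_nonneg: "valid_grid a n x \<Longrightarrow> i \<le> n \<Longrightarrow> 0 \<le> hn x n i"
  using hn_pos less_imp_le by blast

text \<open>discrete_primitive x n v i is the value at x_{i+1/2} of the cell function \<phi> with
  \<phi>_{1/2} = 0 and D_x \<phi> = v at the interior nodes.\<close>
definition discrete_primitive :: "(nat \<Rightarrow> real) \<Rightarrow> nat \<Rightarrow> (nat \<Rightarrow> real) \<Rightarrow> nat \<Rightarrow> real" where
  "discrete_primitive x n v i = (\<Sum>k\<in>{1..i}. hn x n k * v k)"

lemma discrete_primitive_diff:
  "1 \<le> i \<Longrightarrow> discrete_primitive x n v i - discrete_primitive x n v (i - 1) = hn x n i * v i"
  by (cases i) (auto simp: discrete_primitive_def)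

lemma discrete_primitive_sq_le:
  assumes g: "valid_grid a n x" and "i < n"
  shows "(discrete_primitive x n v i)\<^sup>2 \<le> a * (\<Sum>k\<in>{1..<n}. hn x n k * (v k)\<^sup>2)"
proof -
  note hn_nonneg = hn_nonneg[OF g]
  have sub: "{1..i} \<subseteq> {1..<n}" using \<open>i < n\<close> by auto
  have "(discrete_primitive x n v i)\<^sup>2 \<le> (\<Sum>k\<in>{1..i}. hn x n k) * (\<Sum>k\<in>{1..i}. hn x n k * (v k)\<^sup>2)"
    unfolding discrete_primitive_def using \<open>i < n\<close> hn_nonneg
    by (intro weighted_Cauchy_Schwarz_sum) auto
  also have "\<dots> \<le> a * (\<Sum>k\<in>{1..<n}. hn x n k * (v k)\<^sup>2)"
  proof (rule mult_mono)
    have "(\<Sum>k\<in>{1..i}. hn x n k) \<le> (\<Sum>k\<in>{1..<n}. hn x n k)"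
      using hn_nonneg by (intro sum_mono2[OF _ sub]) auto
    then show "(\<Sum>k\<in>{1..i}. hn x n k) \<le> a" using sum_hn_interior_le[OF g] by linarith
    show "(\<Sum>k\<in>{1..i}. hn x n k * (v k)\<^sup>2) \<le> (\<Sum>k\<in>{1..<n}. hn x n k * (v k)\<^sup>2)"
      using hn_nonneg by (intro sum_mono2[OF _ sub]) auto
  qed (use valid_grid_pos[OF g] hn_nonneg \<open>i < n\<close> in \<open>auto intro: sum_nonneg\<close>)
  finally show ?thesis .
qed

lemma sum_discrete_primitive_sq_le:
  assumes g: "valid_grid a n x"
  shows "(\<Sum>i<n. hh x i * (discrete_primitive x n v i)\<^sup>2) \<le> a\<^sup>2 * (\<Sum>k\<in>{1..<n}. hn x n k * (v k)\<^sup>2)"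
proof -
  let ?E = "\<Sum>k\<in>{1..<n}. hn x n k * (v k)\<^sup>2"
  have "(\<Sum>i<n. hh x i * (discrete_primitive x n v i)\<^sup>2) \<le> (\<Sum>i<n. hh x i * (a * ?E))"
    using discrete_primitive_sq_le[OF g] hh_nonneg[OF g] by (intro sum_mono mult_left_mono) auto
  also have "\<dots> = a\<^sup>2 * ?E"
    by (simp add: sum_distrib_right[symmetric] sum_hh_eq[OF g] power2_eq_square)
  finally show ?thesis .
qed

lemma abs_le_of_weighted_double_sum:
  fixes w t :: "nat \<Rightarrow> nat \<Rightarrow> real"
  assumes "finite A" "finite B" "0 < m"
    and weight: "\<And>i j. i \<in> A \<Longrightarrow> j \<in> B \<Longrightarrow> m \<le> w i j"
    and support: "\<And>i j. (i, j) \<notin> A \<times> B \<Longrightarrow> t i j = 0"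
    and le_S: "(\<Sum>i\<in>A. \<Sum>j\<in>B. w i j * (t i j)\<^sup>2) \<le> S"
  shows "\<bar>t i j\<bar> \<le> sqrt (S / m)"
proof -
  have terms_nonneg: "\<And>i j. i \<in> A \<Longrightarrow> j \<in> B \<Longrightarrow> 0 \<le> w i j * (t i j)\<^sup>2"
    using weight \<open>0 < m\<close> by (meson less_le_trans less_imp_le zero_le_power2 mult_nonneg_nonneg)
  show ?thesis
  proof (cases "(i, j) \<in> A \<times> B")
    case True
    then have "w i j * (t i j)\<^sup>2 \<le> (\<Sum>j\<in>B. w i j * (t i j)\<^sup>2)"
      using terms_nonneg \<open>finite B\<close> by (intro member_le_sum) auto
    also have "\<dots> \<le> (\<Sum>i\<in>A. \<Sum>j\<in>B. w i j * (t i j)\<^sup>2)"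
      using True terms_nonneg \<open>finite A\<close> by (intro member_le_sum sum_nonneg) auto
    finally have "m * (t i j)\<^sup>2 \<le> S"
      using True weight[of i j] le_S mult_right_mono[of m "w i j" "(t i j)\<^sup>2"] by auto
    then have "(t i j)\<^sup>2 \<le> S / m" using \<open>0 < m\<close> by (simp add: field_simps)
    then show ?thesis using real_sqrt_le_mono[of "(t i j)\<^sup>2" "S / m"] by simp
  next
    case False
    have "0 \<le> (\<Sum>i\<in>A. \<Sum>j\<in>B. w i j * (t i j)\<^sup>2)"
      by (intro sum_nonneg terms_nonneg)
    then have "0 \<le> S" using le_S by linarith
    with False support show ?thesis using \<open>0 < m\<close> by simp
  qed
qed

lemma stress_norm_nonneg:
  assumes "valid_grid a nx x" "valid_grid b ny y"
  shows "0 \<le> stress_norm nx ny x y \<tau>"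
  using hh_nonneg[OF assms(1)] hh_nonneg[OF assms(2)] hn_nonneg[OF assms(1)] hn_nonneg[OF assms(2)]
  by (auto simp: stress_norm_def split: prod.split
           intro!: add_nonneg_nonneg sum_nonneg mult_nonneg_nonneg)

lemma stress_component_abs_le:
  assumes gx: "valid_grid a nx x" and gy: "valid_grid b ny y"
    and \<tau>: "(t11, t22, t12) \<in> discrete_stresses nx ny"
  defines "M \<equiv> stress_norm nx ny x y (t11, t22, t12) / sqrt (mesh_min x nx * mesh_min y ny)"
  shows "\<bar>t11 i j\<bar> \<le> M" "\<bar>t22 i j\<bar> \<le> M" "\<bar>t12 i j\<bar> \<le> M"
proof -
  let ?m = "mesh_min x nx * mesh_min y ny"
  let ?S1 = "\<Sum>i<nx. \<Sum>j<ny. hh x i * hh y j * (t11 i j)\<^sup>2"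
  let ?S2 = "\<Sum>i<nx. \<Sum>j<ny. hh x i * hh y j * (t22 i j)\<^sup>2"
  let ?S3 = "\<Sum>i\<le>nx. \<Sum>j\<le>ny. hn x nx i * hn y ny j * (t12 i j)\<^sup>2"
  have m: "0 < ?m" using mesh_min_pos[OF gx] mesh_min_pos[OF gy] by simp
  have "0 \<le> ?S1" "0 \<le> ?S2" "0 \<le> ?S3"
    using hh_nonneg[OF gx] hh_nonneg[OF gy] hn_nonneg[OF gx] hn_nonneg[OF gy]
    by (auto intro!: sum_nonneg mult_nonneg_nonneg)
  then have S: "?S1 \<le> ?S1 + ?S2 + ?S3" "?S2 \<le> ?S1 + ?S2 + ?S3" "?S3 \<le> ?S1 + ?S2 + ?S3"
    by linarith+
  have M: "M = sqrt ((?S1 + ?S2 + ?S3) / ?m)"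
    by (simp add: M_def stress_norm_def real_sqrt_divide)
  have cell: "?m \<le> hh x i * hh y j" if "i \<in> {..<nx}" "j \<in> {..<ny}" for i j
    using that mesh_min_le_hh[OF gx] mesh_min_le_hh[OF gy] hh_nonneg[OF gx] mesh_min_pos[OF gy]
    by (intro mult_mono) auto
  have node: "?m \<le> hn x nx i * hn y ny j" if "i \<in> {..nx}" "j \<in> {..ny}" for i j
    using that mesh_min_le_hn[OF gx] mesh_min_le_hn[OF gy] hn_nonneg[OF gx] mesh_min_pos[OF gy]
    by (intro mult_mono) auto
  have "\<And>i j. (i, j) \<notin> {..<nx} \<times> {..<ny} \<Longrightarrow> t11 i j = 0"
    "\<And>i j. (i, j) \<notin> {..<nx} \<times> {..<ny} \<Longrightarrow> t22 i j = 0"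
    "\<And>i j. (i, j) \<notin> {..nx} \<times> {..ny} \<Longrightarrow> t12 i j = 0"
    using \<tau> by (auto simp: discrete_stresses_def)
  from abs_le_of_weighted_double_sum[OF _ _ m cell this(1) S(1)]
    abs_le_of_weighted_double_sum[OF _ _ m cell this(2) S(2)]
    abs_le_of_weighted_double_sum[OF _ _ m node this(3) S(3)]
  show "\<bar>t11 i j\<bar> \<le> M" "\<bar>t22 i j\<bar> \<le> M" "\<bar>t12 i j\<bar> \<le> M"
    unfolding M by simp_all
qed

lemma difference_quotient_term_abs_le:
  fixes p q t1 t2 s1 s2 v M :: real
  assumes "0 < p" "0 < q" "\<bar>t1\<bar> \<le> M" "\<bar>t2\<bar> \<le> M" "\<bar>s1\<bar> \<le> M" "\<bar>s2\<bar> \<le> M"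
  shows "\<bar>p * q * ((t1 - t2) / p + (s1 - s2) / q) * v\<bar> \<le> 2 * (p + q) * \<bar>v\<bar> * M"
proof -
  have "p * q * ((t1 - t2) / p + (s1 - s2) / q) = q * (t1 - t2) + p * (s1 - s2)"
    using assms by (simp add: field_simps)
  moreover have "\<bar>q * (t1 - t2) + p * (s1 - s2)\<bar> \<le> 2 * (p + q) * M"
  proof -
    have "\<bar>t1 - t2\<bar> \<le> 2 * M" "\<bar>s1 - s2\<bar> \<le> 2 * M" using assms by linarith+
    then have "\<bar>q * (t1 - t2)\<bar> \<le> q * (2 * M)" "\<bar>p * (s1 - s2)\<bar> \<le> p * (2 * M)"
      using assms by (simp_all add: abs_mult)
    moreover have "q * (2 * M) + p * (2 * M) = 2 * (p + q) * M" by (simp add: algebra_simps)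
    ultimately show ?thesis using abs_triangle_ineq[of "q * (t1 - t2)" "p * (s1 - s2)"] by linarith
  qed
  ultimately have "\<bar>p * q * ((t1 - t2) / p + (s1 - s2) / q)\<bar> * \<bar>v\<bar> \<le> 2 * (p + q) * M * \<bar>v\<bar>"
    by (simp add: mult_right_mono)
  then show ?thesis by (simp add: abs_mult mult_ac)
qed

lemma abs_double_sum_le:
  fixes f g :: "'a \<Rightarrow> 'b \<Rightarrow> real"
  assumes "\<And>i j. i \<in> A \<Longrightarrow> j \<in> B \<Longrightarrow> \<bar>f i j\<bar> \<le> g i j"
  shows "\<bar>\<Sum>i\<in>A. \<Sum>j\<in>B. f i j\<bar> \<le> (\<Sum>i\<in>A. \<Sum>j\<in>B. g i j)"
  using assms by (intro order_trans[OF sum_abs] sum_mono) (simp add: order_trans[OF sum_abs] sum_mono)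

lemma bform_abs_le_stress_norm:
  assumes gx: "valid_grid a nx x" and gy: "valid_grid b ny y"
  obtains K where "\<And>\<tau>. \<tau> \<in> discrete_stresses nx ny \<Longrightarrow>
    \<bar>bform nx ny x y \<tau> (vx, vy)\<bar> \<le> K * stress_norm nx ny x y \<tau>"
proof -
  define C where "C = (\<Sum>i\<in>{1..<nx}. \<Sum>j<ny. 2 * (hn x nx i + hh y j) * \<bar>vx i j\<bar>)
     + (\<Sum>i<nx. \<Sum>j\<in>{1..<ny}. 2 * (hh x i + hn y ny j) * \<bar>vy i j\<bar>)"
  define m where "m = mesh_min x nx * mesh_min y ny"
  have "\<bar>bform nx ny x y \<tau> (vx, vy)\<bar> \<le> C / sqrt m * stress_norm nx ny x y \<tau>"
    if \<tau>: "\<tau> \<in> discrete_stresses nx ny" for \<tau>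
  proof -
    obtain t11 t22 t12 where \<tau>_eq: "\<tau> = (t11, t22, t12)" by (cases \<tau>)
    define M where "M = stress_norm nx ny x y \<tau> / sqrt m"
    have bound: "\<And>i j. \<bar>t11 i j\<bar> \<le> M" "\<And>i j. \<bar>t22 i j\<bar> \<le> M" "\<And>i j. \<bar>t12 i j\<bar> \<le> M"
      using stress_component_abs_le[OF gx gy \<tau>[unfolded \<tau>_eq]] by (simp_all add: M_def m_def \<tau>_eq)
    have "\<bar>\<Sum>i\<in>{1..<nx}. \<Sum>j<ny. hn x nx i * hh y j *
        ((t11 i j - t11 (i - 1) j) / hn x nx i + (t12 i (Suc j) - t12 i j) / hh y j) * vx i j\<bar>
      \<le> (\<Sum>i\<in>{1..<nx}. \<Sum>j<ny. 2 * (hn x nx i + hh y j) * \<bar>vx i j\<bar> * M)"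
      by (intro abs_double_sum_le difference_quotient_term_abs_le bound hn_pos[OF gx] hh_pos[OF gy])
        auto
    moreover have "\<bar>\<Sum>i<nx. \<Sum>j\<in>{1..<ny}. hh x i * hn y ny j *
        ((t12 (Suc i) j - t12 i j) / hh x i + (t22 i j - t22 i (j - 1)) / hn y ny j) * vy i j\<bar>
      \<le> (\<Sum>i<nx. \<Sum>j\<in>{1..<ny}. 2 * (hh x i + hn y ny j) * \<bar>vy i j\<bar> * M)"
      by (intro abs_double_sum_le difference_quotient_term_abs_le bound hn_pos[OF gy] hh_pos[OF gx])
        auto
    ultimately have "\<bar>bform nx ny x y \<tau> (vx, vy)\<bar> \<le> C * M"
      unfolding \<tau>_eq bform_def C_def prod.case by (simp add: sum_distrib_right distrib_right)
    then show ?thesis by (simp add: M_def)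
  qed
  then show ?thesis by (rule that)
qed

lemma bdd_above_bform_quotient:
  assumes gx: "valid_grid a nx x" and gy: "valid_grid b ny y"
  shows "bdd_above ((\<lambda>\<tau>. bform nx ny x y \<tau> (vx, vy) / stress_norm nx ny x y \<tau>)
    ` discrete_stresses nx ny)"
proof -
  obtain K where K: "\<And>\<tau>. \<tau> \<in> discrete_stresses nx ny \<Longrightarrow>
      \<bar>bform nx ny x y \<tau> (vx, vy)\<bar> \<le> K * stress_norm nx ny x y \<tau>"
    using bform_abs_le_stress_norm[OF gx gy] by metis
  show ?thesis
  proof (rule bdd_aboveI2)
    fix \<tau> assume \<tau>: "\<tau> \<in> discrete_stresses nx ny"
    let ?N = "stress_norm nx ny x y \<tau>"
    show "bform nx ny x y \<tau> (vx, vy) / ?N \<le> \<bar>K\<bar>"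
    proof (cases "?N = 0")
      case False
      then have N: "0 < ?N" using stress_norm_nonneg[OF gx gy] by (simp add: order_less_le)
      then have "K * ?N \<le> \<bar>K\<bar> * ?N" by (simp add: mult_right_mono)
      with K[OF \<tau>] have "bform nx ny x y \<tau> (vx, vy) \<le> \<bar>K\<bar> * ?N" by linarith
      with N show ?thesis by (simp add: divide_le_eq)
    qed simp
  qed
qed

definition corner_stress :: "gridfun \<times> gridfun \<times> gridfun" where
  "corner_stress = ((\<lambda>_ _. 0), (\<lambda>_ _. 0), (\<lambda>i j. if i = 0 \<and> j = 0 then 1 else 0))"

lemma corner_stress_mem: "corner_stress \<in> discrete_stresses nx ny - {zero_stress}"
  by (auto simp: corner_stress_def zero_stress_def discrete_stresses_def fun_eq_iff)

lemma bform_corner_stress: "bform nx ny x y corner_stress (vx, vy) = 0"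
proof -
  have "bform nx ny x y corner_stress (vx, vy) = 0 + 0"
    unfolding bform_def corner_stress_def prod.case
    by (intro arg_cong2[where f = "(+)"] sum.neutral ballI) auto
  then show ?thesis by simp
qed

definition primitive_stress :: "nat \<Rightarrow> nat \<Rightarrow> (nat \<Rightarrow> real) \<Rightarrow> (nat \<Rightarrow> real)
    \<Rightarrow> gridfun \<Rightarrow> gridfun \<Rightarrow> gridfun \<times> gridfun \<times> gridfun" where
  "primitive_stress nx ny x y vx vy =
     ((\<lambda>i j. if i < nx \<and> j < ny then discrete_primitive x nx (\<lambda>k. vx k j) i else 0),
      (\<lambda>i j. if i < nx \<and> j < ny then discrete_primitive y ny (vy i) j else 0),
      (\<lambda>_ _. 0))"

lemma primitive_stress_mem: "primitive_stress nx ny x y vx vy \<in> discrete_stresses nx ny"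
  by (simp add: primitive_stress_def discrete_stresses_def)

lemma disp_norm_sq:
  assumes gx: "valid_grid a nx x" and gy: "valid_grid b ny y"
  shows "(disp_norm nx ny x y (vx, vy))\<^sup>2 =
    (\<Sum>i\<in>{1..<nx}. \<Sum>j<ny. hn x nx i * hh y j * (vx i j)\<^sup>2)
    + (\<Sum>i<nx. \<Sum>j\<in>{1..<ny}. hh x i * hn y ny j * (vy i j)\<^sup>2)"
proof -
  have "0 \<le> (\<Sum>i\<in>{1..<nx}. \<Sum>j<ny. hn x nx i * hh y j * (vx i j)\<^sup>2)
    + (\<Sum>i<nx. \<Sum>j\<in>{1..<ny}. hh x i * hn y ny j * (vy i j)\<^sup>2)"
    using hh_nonneg[OF gx] hh_nonneg[OF gy] hn_nonneg[OF gx] hn_nonneg[OF gy]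
    by (auto intro!: add_nonneg_nonneg sum_nonneg mult_nonneg_nonneg)
  then show ?thesis by (simp add: disp_norm_def)
qed

lemma disp_norm_nonneg:
  assumes gx: "valid_grid a nx x" and gy: "valid_grid b ny y"
  shows "0 \<le> disp_norm nx ny x y (vx, vy)"
  using hh_nonneg[OF gx] hh_nonneg[OF gy] hn_nonneg[OF gx] hn_nonneg[OF gy]
  by (auto simp: disp_norm_def intro!: add_nonneg_nonneg sum_nonneg mult_nonneg_nonneg)

lemma bform_primitive_stress:
  assumes gx: "valid_grid a nx x" and gy: "valid_grid b ny y"
  shows "bform nx ny x y (primitive_stress nx ny x y vx vy) (vx, vy) = (disp_norm nx ny x y (vx, vy))\<^sup>2"
  unfolding disp_norm_sq[OF gx gy] bform_def primitive_stress_def prod.case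
proof (intro arg_cong2[where f = "(+)"] sum.cong refl)
  fix i j assume "i \<in> {1..<nx}" "j \<in> {..<ny}"
  moreover have "0 < hn x nx i" "i - 1 < nx" using \<open>i \<in> {1..<nx}\<close> hn_pos[OF gx] by auto
  ultimately show "hn x nx i * hh y j *
      (((if i < nx \<and> j < ny then discrete_primitive x nx (\<lambda>k. vx k j) i else 0)
        - (if i - 1 < nx \<and> j < ny then discrete_primitive x nx (\<lambda>k. vx k j) (i - 1) else 0)) / hn x nx i
       + (0 - 0) / hh y j) * vx i j = hn x nx i * hh y j * (vx i j)\<^sup>2"
    using discrete_primitive_diff[of i x nx "\<lambda>k. vx k j"] by (simp add: power2_eq_square)
next
  fix i j assume "i \<in> {..<nx}" "j \<in> {1..<ny}"
  moreover have "0 < hn y ny j" "j - 1 < ny" using \<open>j \<in> {1..<ny}\<close> hn_pos[OF gy] by auto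
  ultimately show "hh x i * hn y ny j * ((0 - 0) / hh x i
       + ((if i < nx \<and> j < ny then discrete_primitive y ny (vy i) j else 0)
        - (if i < nx \<and> j - 1 < ny then discrete_primitive y ny (vy i) (j - 1) else 0)) / hn y ny j)
       * vy i j = hh x i * hn y ny j * (vy i j)\<^sup>2"
    using discrete_primitive_diff[of j y ny "vy i"] by (simp add: power2_eq_square)
qed

lemma stress_norm_primitive_stress_le:
  assumes gx: "valid_grid a nx x" and gy: "valid_grid b ny y"
  shows "stress_norm nx ny x y (primitive_stress nx ny x y vx vy) \<le> max a b * disp_norm nx ny x y (vx, vy)"
proof -
  define Px where "Px = (\<Sum>i\<in>{1..<nx}. \<Sum>j<ny. hn x nx i * hh y j * (vx i j)\<^sup>2)"
  define Py where "Py = (\<Sum>i<nx. \<Sum>j\<in>{1..<ny}. hh x i * hn y ny j * (vy i j)\<^sup>2)"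
  have Px: "0 \<le> Px" and Py: "0 \<le> Py"
    using hh_nonneg[OF gx] hh_nonneg[OF gy] hn_nonneg[OF gx] hn_nonneg[OF gy]
    by (auto simp: Px_def Py_def intro!: sum_nonneg mult_nonneg_nonneg)
  have "(\<Sum>i<nx. \<Sum>j<ny. hh x i * hh y j * (discrete_primitive x nx (\<lambda>k. vx k j) i)\<^sup>2)
      = (\<Sum>j<ny. hh y j * (\<Sum>i<nx. hh x i * (discrete_primitive x nx (\<lambda>k. vx k j) i)\<^sup>2))"
    by (subst sum.swap) (simp add: sum_distrib_left mult_ac)
  also have "\<dots> \<le> (\<Sum>j<ny. hh y j * (a\<^sup>2 * (\<Sum>k\<in>{1..<nx}. hn x nx k * (vx k j)\<^sup>2)))"
    using sum_discrete_primitive_sq_le[OF gx] hh_nonneg[OF gy] by (intro sum_mono mult_left_mono) auto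
  also have "\<dots> = a\<^sup>2 * Px"
    unfolding Px_def sum_distrib_left by (subst sum.swap) (simp add: mult_ac)
  finally have S1: "(\<Sum>i<nx. \<Sum>j<ny. hh x i * hh y j * (discrete_primitive x nx (\<lambda>k. vx k j) i)\<^sup>2)
      \<le> a\<^sup>2 * Px" .
  have "(\<Sum>i<nx. \<Sum>j<ny. hh x i * hh y j * (discrete_primitive y ny (vy i) j)\<^sup>2)
      = (\<Sum>i<nx. hh x i * (\<Sum>j<ny. hh y j * (discrete_primitive y ny (vy i) j)\<^sup>2))"
    by (simp add: sum_distrib_left mult_ac)
  also have "\<dots> \<le> (\<Sum>i<nx. hh x i * (b\<^sup>2 * (\<Sum>k\<in>{1..<ny}. hn y ny k * (vy i k)\<^sup>2)))"
    using sum_discrete_primitive_sq_le[OF gy] hh_nonneg[OF gx] by (intro sum_mono mult_left_mono) auto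
  also have "\<dots> = b\<^sup>2 * Py"
    unfolding Py_def by (simp add: sum_distrib_left mult_ac)
  finally have S2: "(\<Sum>i<nx. \<Sum>j<ny. hh x i * hh y j * (discrete_primitive y ny (vy i) j)\<^sup>2)
      \<le> b\<^sup>2 * Py" .
  have "a\<^sup>2 * Px + b\<^sup>2 * Py \<le> (max a b)\<^sup>2 * (Px + Py)"
    using valid_grid_pos[OF gx] valid_grid_pos[OF gy] Px Py
    by (simp add: distrib_left add_mono mult_right_mono power_mono)
  with S1 S2 have "stress_norm nx ny x y (primitive_stress nx ny x y vx vy) \<le> sqrt ((max a b)\<^sup>2 * (Px + Py))"
    by (simp add: stress_norm_def primitive_stress_def)
  also have "\<dots> = max a b * disp_norm nx ny x y (vx, vy)"
    using valid_grid_pos[OF gx] by (simp add: real_sqrt_mult disp_norm_def Px_def Py_def)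
  finally show ?thesis .
qed

lemma SUP_bform_quotient_ge:
  assumes gx: "valid_grid a nx x" and gy: "valid_grid b ny y"
  shows "disp_norm nx ny x y (vx, vy) / max a b \<le>
    (SUP \<tau>\<in>discrete_stresses nx ny - {zero_stress}.
       bform nx ny x y \<tau> (vx, vy) / stress_norm nx ny x y \<tau>)"
proof -
  let ?f = "\<lambda>\<tau>. bform nx ny x y \<tau> (vx, vy) / stress_norm nx ny x y \<tau>"
  let ?T = "discrete_stresses nx ny - {zero_stress}"
  let ?D = "disp_norm nx ny x y (vx, vy)"
  have "bdd_above (?f ` ?T)"
    by (rule bdd_above_mono[OF bdd_above_bform_quotient[OF gx gy]]) auto
  then have SUP_ge: "?f \<tau> \<le> (SUP \<tau>\<in>?T. ?f \<tau>)" if "\<tau> \<in> ?T" for \<tau>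
    by (rule cSUP_upper[OF that])
  have ab: "0 < max a b" using valid_grid_pos[OF gx] by simp
  show ?thesis
  proof (cases "?D = 0")
    case True
    then show ?thesis
      using SUP_ge[OF corner_stress_mem] by (simp add: bform_corner_stress)
  next
    case False
    then have D: "0 < ?D" using disp_norm_nonneg[OF gx gy, of vx vy] by linarith
    let ?\<tau> = "primitive_stress nx ny x y vx vy"
    let ?N = "stress_norm nx ny x y ?\<tau>"
    have form: "bform nx ny x y ?\<tau> (vx, vy) = ?D\<^sup>2" by (rule bform_primitive_stress[OF gx gy])
    obtain K where "\<bar>bform nx ny x y ?\<tau> (vx, vy)\<bar> \<le> K * ?N"
      using bform_abs_le_stress_norm[OF gx gy] primitive_stress_mem by metis
    with form D have "?N \<noteq> 0" by (metis abs_le_zero_iff mult_zero_right power_not_zero less_irrefl)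
    then have N: "0 < ?N" using stress_norm_nonneg[OF gx gy] by (simp add: order_less_le)
    have "bform nx ny x y zero_stress (vx, vy) = 0"
      unfolding bform_def zero_stress_def prod.case diff_self by simp
    with form D have "?\<tau> \<noteq> zero_stress" by auto
    then have \<tau>: "?\<tau> \<in> ?T" using primitive_stress_mem by simp
    have "?D / max a b = ?D\<^sup>2 / (max a b * ?D)"
      using D by (simp add: power2_eq_square)
    also have "\<dots> \<le> ?D\<^sup>2 / ?N"
      using stress_norm_primitive_stress_le[OF gx gy] N D ab
      by (intro divide_left_mono) auto
    also have "\<dots> = ?f ?\<tau>" using form by simp
    also have "\<dots> \<le> (SUP \<tau>\<in>?T. ?f \<tau>)" by (rule SUP_ge[OF \<tau>])
    finally show ?thesis .
  qed
qed

theorem lemma3p1: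
  fixes a b :: real
  assumes "0 < a" and "0 < b"
  shows "\<exists>\<beta>>0. \<forall>nx ny x y vx vy.
           valid_grid a nx x \<longrightarrow> valid_grid b ny y \<longrightarrow>
           (vx, vy) \<in> admissible_displacements nx ny \<longrightarrow>
           (SUP \<tau>\<in>discrete_stresses nx ny - {zero_stress}.
              bform nx ny x y \<tau> (vx, vy) / stress_norm nx ny x y \<tau>)
             \<ge> \<beta> * disp_norm nx ny x y (vx, vy)"
proof (intro exI[of _ "1 / max a b"] conjI allI impI)
  show "0 < 1 / max a b" using assms by simp
next
  fix nx ny x y vx vy
  assume "valid_grid a nx x" "valid_grid b ny y"
  then show "1 / max a b * disp_norm nx ny x y (vx, vy) \<le>
      (SUP \<tau>\<in>discrete_stresses nx ny - {zero_stress}.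
         bform nx ny x y \<tau> (vx, vy) / stress_norm nx ny x y \<tau>)"
    using SUP_bform_quotient_ge by simp
qed

end
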